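(* Let $D=(V,A)$ be a digraph, $\{S,T\}$ a partition of $V$ with $S,T\ne\emptyset$, $H=A[S,T]$ the set of arcs from $S$ to $T$, and $k$ an integer. Let $\mathcal{C}_1=\{\delta^-_H(U):\emptyset\neq U\subseteq T\}$ and define $g_1:\mathcal{C}_1\to\mathbb{Z}$ by $g_1(C)=\max\{k-d^-_{A[T]}(U): \emptyset\ne U\subseteq T,\ C=\delta^-_H(U)\}$. Then $\mathcal{C}_1$ is an intersecting family on $H$ and $g_1$ is intersecting supermodular. Moreover, if $k\le \min\{|\delta^-_A(U)|:\emptyset\neq U\subseteq T\}$, then $g_1(C)\le\min\{k,|C|\}$ for every $C\in\mathcal{C}_1$.
   Context: For $B\subseteq A$ and $U\subseteq V$, $\delta^-_B(U)$ is the set of arcs of $B$ entering $U$ and $d^-_B(U)=|\delta^-_B(U)|$; $A[T]$ is the set of arcs with both ends in $T$. A family $\mathcal{C}\subseteq 2^H$ is intersecting if $X\cup Y,X\cap Y\in\mathcal{C}$ whenever $X,Y\in\mathcal{C}$ and $X\cap Y\ne\emptyset$; $g:\mathcal{C}\to\mathbb{R}$ is intersecting supermodular if $g(X)+g(Y)\le g(X\cup Y)+g(X\cap Y)$ for all such $X,Y$. *)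

theory Defs
  imports Main "Graph_Theory.Digraph"
begin

definition delta_in :: "('a,'b) pre_digraph \<Rightarrow> 'b set \<Rightarrow> 'a set \<Rightarrow> 'b set" where
  "delta_in G B U = {e \<in> B. head G e \<in> U \<and> tail G e \<notin> U}"

definition arcs_in :: "('a,'b) pre_digraph \<Rightarrow> 'a set \<Rightarrow> 'b set" where
  "arcs_in G X = {e \<in> arcs G. tail G e \<in> X \<and> head G e \<in> X}"

definition arcs_between :: "('a,'b) pre_digraph \<Rightarrow> 'a set \<Rightarrow> 'a set \<Rightarrow> 'b set" where
  "arcs_between G S T = {e \<in> arcs G. tail G e \<in> S \<and> head G e \<in> T}"

definition intersecting_family :: "'c set \<Rightarrow> 'c set set \<Rightarrow> bool" where
  "intersecting_family H \<C> \<longleftrightarrow> \<C> \<subseteq> Pow H \<and>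
     (\<forall>X\<in>\<C>. \<forall>Y\<in>\<C>. X \<inter> Y \<noteq> {} \<longrightarrow> X \<union> Y \<in> \<C> \<and> X \<inter> Y \<in> \<C>)"

definition intersecting_supermodular :: "'c set set \<Rightarrow> ('c set \<Rightarrow> real) \<Rightarrow> bool" where
  "intersecting_supermodular \<C> g \<longleftrightarrow>
     (\<forall>X\<in>\<C>. \<forall>Y\<in>\<C>. X \<inter> Y \<noteq> {} \<longrightarrow> g X + g Y \<le> g (X \<union> Y) + g (X \<inter> Y))"

end

theory Submission
  imports Defs
begin

text \<open>For U \<subseteq> T every arc of H = A[S,T] has its tail outside U, so the in-cut map
  U \<mapsto> delta_H(U) sends unions to unions and intersections to intersections. Hence C_1 is the
  image of the family of nonempty subsets of T, and g_1, the maximum of the supermodular function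
  U \<mapsto> k - d_A[T](U) over the fibres of this map, is intersecting supermodular: for maximisers
  U, W of the fibres of X and Y, the sets U \<union> W and U \<inter> W lie in the fibres of X \<union> Y and
  X \<inter> Y. The bound g_1(C) \<le> |C| holds because delta_A(U) splits into delta_H(U) and
  delta_A[T](U).\<close>

definition fiber_max :: "'i set \<Rightarrow> ('i \<Rightarrow> 'c) \<Rightarrow> ('i \<Rightarrow> 'r::linorder) \<Rightarrow> 'c \<Rightarrow> 'r" where
  "fiber_max I f h C = Max {h U | U. U \<in> I \<and> f U = C}"

lemma finite_fiber:
  assumes "finite I"
  shows "finite {h U | U. U \<in> I \<and> f U = C}"
  using assms by simp

lemma fiber_max_ge:
  assumes "finite I" and "U \<in> I"
  shows "h U \<le> fiber_max I f h (f U)"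
  unfolding fiber_max_def using assms by (intro Max_ge finite_fiber) auto

lemma fiber_max_attained:
  assumes "finite I" and "C \<in> f ` I"
  obtains V where "V \<in> I" and "f V = C" and "fiber_max I f h C = h V"
proof -
  have "fiber_max I f h C \<in> {h V | V. V \<in> I \<and> f V = C}"
    unfolding fiber_max_def using assms by (intro Max_in finite_fiber) auto
  then show ?thesis using that by auto
qed

lemma fiber_max_le:
  assumes "finite I" and "C \<in> f ` I" and "\<And>U. \<lbrakk>U \<in> I; f U = C\<rbrakk> \<Longrightarrow> h U \<le> b"
  shows "fiber_max I f h C \<le> b"
proof -
  obtain V where "V \<in> I" "f V = C" "fiber_max I f h C = h V"
    using fiber_max_attained[OF assms(1,2)] .
  then show ?thesis using assms(3) by simp
qed

locale lattice_image =
  fixes I :: "'i set set" and f :: "'i set \<Rightarrow> 'c set"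
  assumes Un_closed: "\<lbrakk>U \<in> I; W \<in> I\<rbrakk> \<Longrightarrow> U \<union> W \<in> I"
    and Int_closed: "\<lbrakk>U \<in> I; W \<in> I; f U \<inter> f W \<noteq> {}\<rbrakk> \<Longrightarrow> U \<inter> W \<in> I"
    and map_Un: "\<lbrakk>U \<in> I; W \<in> I\<rbrakk> \<Longrightarrow> f (U \<union> W) = f U \<union> f W"
    and map_Int: "\<lbrakk>U \<in> I; W \<in> I\<rbrakk> \<Longrightarrow> f (U \<inter> W) = f U \<inter> f W"
begin

lemma intersecting_family_image:
  assumes "\<And>U. U \<in> I \<Longrightarrow> f U \<subseteq> H"
  shows "intersecting_family H (f ` I)"
  unfolding intersecting_family_def
proof (intro conjI ballI impI)
  show "f ` I \<subseteq> Pow H" using assms by auto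
next
  fix X Y assume "X \<in> f ` I" "Y \<in> f ` I" "X \<inter> Y \<noteq> {}"
  then obtain U W where "U \<in> I" "W \<in> I" "X = f U" "Y = f W" "f U \<inter> f W \<noteq> {}" by auto
  then show "X \<union> Y \<in> f ` I" and "X \<inter> Y \<in> f ` I"
    using Un_closed Int_closed map_Un map_Int by (metis image_eqI)+
qed

lemma intersecting_supermodular_fiber_max:
  fixes h :: "'i set \<Rightarrow> int"
  assumes "finite I"
    and supermod: "\<And>U W. \<lbrakk>U \<in> I; W \<in> I\<rbrakk> \<Longrightarrow> h U + h W \<le> h (U \<union> W) + h (U \<inter> W)"
  shows "intersecting_supermodular (f ` I) (\<lambda>C. real_of_int (fiber_max I f h C))"
  unfolding intersecting_supermodular_def
proof (intro ballI impI)
  fix X Y assume "X \<in> f ` I" "Y \<in> f ` I" and XY: "X \<inter> Y \<noteq> {}"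
  obtain U where U: "U \<in> I" "f U = X" "fiber_max I f h X = h U"
    using fiber_max_attained[OF \<open>finite I\<close> \<open>X \<in> f ` I\<close>] .
  obtain W where W: "W \<in> I" "f W = Y" "fiber_max I f h Y = h W"
    using fiber_max_attained[OF \<open>finite I\<close> \<open>Y \<in> f ` I\<close>] .
  have "h (U \<union> W) \<le> fiber_max I f h (X \<union> Y)"
    using fiber_max_ge[OF \<open>finite I\<close> Un_closed[OF U(1) W(1)], where f = f and h = h]
      map_Un[OF U(1) W(1)] U W by simp
  moreover have "h (U \<inter> W) \<le> fiber_max I f h (X \<inter> Y)"
    using fiber_max_ge[OF \<open>finite I\<close> Int_closed[OF U(1) W(1)], where f = f and h = h]
      map_Int[OF U(1) W(1)] U W XY by simp
  ultimately show "real_of_int (fiber_max I f h X) + real_of_int (fiber_max I f h Y)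
      \<le> real_of_int (fiber_max I f h (X \<union> Y)) + real_of_int (fiber_max I f h (X \<inter> Y))"
    using supermod[OF U(1) W(1)] U(3) W(3) by linarith
qed

end

lemma card_delta_in_submodular:
  assumes "finite B"
  shows "card (delta_in G B (U \<union> W)) + card (delta_in G B (U \<inter> W))
    \<le> card (delta_in G B U) + card (delta_in G B W)"
proof -
  have card_eq: "card {e \<in> B. P e} = (\<Sum>e\<in>B. if P e then 1 else 0 :: nat)" for P
    using assms by (simp add: sum.inter_filter[symmetric])
  show ?thesis
    unfolding delta_in_def card_eq sum.distrib[symmetric] by (rule sum_mono) auto
qed

lemma delta_in_empty [simp]: "delta_in G B {} = {}"
  by (simp add: delta_in_def)

lemma delta_in_arcs_between_Un:
  assumes "S \<inter> T = {}" and "U \<subseteq> T" and "W \<subseteq> T"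
  shows "delta_in G (arcs_between G S T) (U \<union> W)
    = delta_in G (arcs_between G S T) U \<union> delta_in G (arcs_between G S T) W"
  using assms unfolding delta_in_def arcs_between_def by auto

lemma delta_in_arcs_between_Int:
  assumes "S \<inter> T = {}" and "U \<subseteq> T" and "W \<subseteq> T"
  shows "delta_in G (arcs_between G S T) (U \<inter> W)
    = delta_in G (arcs_between G S T) U \<inter> delta_in G (arcs_between G S T) W"
  using assms unfolding delta_in_def arcs_between_def by auto

lemma lattice_image_in_cuts:
  assumes "S \<inter> T = {}"
  shows "lattice_image {U. U \<noteq> {} \<and> U \<subseteq> T} (delta_in G (arcs_between G S T))"
    (is "lattice_image ?I ?\<delta>")
proof
  fix U W assume "U \<in> ?I" "W \<in> ?I"
  then show "U \<union> W \<in> ?I" by auto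
next
  fix U W assume U: "U \<in> ?I" and W: "W \<in> ?I" and meet: "?\<delta> U \<inter> ?\<delta> W \<noteq> {}"
  have "?\<delta> (U \<inter> W) = ?\<delta> U \<inter> ?\<delta> W"
    using U W by (intro delta_in_arcs_between_Int[OF assms]) auto
  with meet have "U \<inter> W \<noteq> {}" by force
  then show "U \<inter> W \<in> ?I" using U by auto
next
  fix U W assume "U \<in> ?I" "W \<in> ?I"
  then show "?\<delta> (U \<union> W) = ?\<delta> U \<union> ?\<delta> W" and "?\<delta> (U \<inter> W) = ?\<delta> U \<inter> ?\<delta> W"
    using assms by (simp_all add: delta_in_arcs_between_Un delta_in_arcs_between_Int)
qed

context fin_digraph
begin

lemma card_delta_in_le_split:
  assumes "S \<union> T = verts G" and "U \<subseteq> T"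
  shows "card (delta_in G (arcs G) U)
    \<le> card (delta_in G (arcs_between G S T) U) + card (delta_in G (arcs_in G T) U)"
proof -
  have "delta_in G (arcs G) U
      \<subseteq> delta_in G (arcs_between G S T) U \<union> delta_in G (arcs_in G T) U"
    using assms tail_in_verts unfolding delta_in_def arcs_between_def arcs_in_def by blast
  moreover have "finite (delta_in G (arcs_between G S T) U \<union> delta_in G (arcs_in G T) U)"
    unfolding delta_in_def arcs_between_def arcs_in_def by simp
  ultimately show ?thesis by (meson card_Un_le card_mono order_trans)
qed

end

theorem mainTheorem5:
  fixes G :: "('a,'b) pre_digraph" and S T :: "'a set" and k :: int
    and H :: "'b set" and \<C>1 :: "'b set set" and g1 :: "'b set \<Rightarrow> int"
  assumes "fin_digraph G"
    and "S \<union> T = verts G" and "S \<inter> T = {}" and "S \<noteq> {}" and "T \<noteq> {}"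
    and H_def: "H = arcs_between G S T"
    and C1_def: "\<C>1 = {delta_in G H U | U. U \<noteq> {} \<and> U \<subseteq> T}"
    and g1_def: "\<And>C. g1 C = Max {k - int (card (delta_in G (arcs_in G T) U)) | U.
                                   U \<noteq> {} \<and> U \<subseteq> T \<and> C = delta_in G H U}"
  shows "intersecting_family H \<C>1
    \<and> intersecting_supermodular \<C>1 (\<lambda>C. real_of_int (g1 C))
    \<and> (k \<le> Min {int (card (delta_in G (arcs G) U)) | U. U \<noteq> {} \<and> U \<subseteq> T}
         \<longrightarrow> (\<forall>C\<in>\<C>1. g1 C \<le> min k (int (card C))))"
proof -
  interpret fin_digraph G by fact
  define I where "I = {U. U \<noteq> {} \<and> U \<subseteq> T}"
  define h where "h U = k - int (card (delta_in G (arcs_in G T) U))" for U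
  have "finite T" using assms(2) finite_verts by (metis finite_Un)
  then have finI: "finite I" unfolding I_def by simp
  interpret lattice_image I "delta_in G H"
    unfolding I_def H_def using assms(3) by (rule lattice_image_in_cuts)
  have C1_image: "\<C>1 = delta_in G H ` I" unfolding C1_def I_def by auto
  have g1_fiber_max: "g1 C = fiber_max I (delta_in G H) h C" for C
    unfolding g1_def fiber_max_def I_def h_def by (rule arg_cong[where f = Max]) auto
  have "intersecting_family H \<C>1"
    unfolding C1_image by (rule intersecting_family_image) (auto simp: delta_in_def)
  moreover have "intersecting_supermodular \<C>1 (\<lambda>C. real_of_int (g1 C))"
    unfolding C1_image g1_fiber_max using finI
  proof (rule intersecting_supermodular_fiber_max)
    have fin: "finite (arcs_in G T)" unfolding arcs_in_def by simp
    show "h U + h W \<le> h (U \<union> W) + h (U \<inter> W)" for U W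
      unfolding h_def using card_delta_in_submodular[OF fin, where G = G and U = U and W = W]
      by linarith
  qed
  moreover have "g1 C \<le> min k (int (card C))"
    if k_le: "k \<le> Min {int (card (delta_in G (arcs G) U)) | U. U \<noteq> {} \<and> U \<subseteq> T}"
      and "C \<in> \<C>1" for C
    unfolding g1_fiber_max
  proof (rule fiber_max_le[OF finI])
    show "C \<in> delta_in G H ` I" using \<open>C \<in> \<C>1\<close> unfolding C1_image .
    fix U assume U: "U \<in> I" "delta_in G H U = C"
    have "Min {int (card (delta_in G (arcs G) U)) | U. U \<noteq> {} \<and> U \<subseteq> T}
        \<le> int (card (delta_in G (arcs G) U))"
      using U(1) finI unfolding I_def by (intro Min_le) auto
    then show "h U \<le> min k (int (card C))"
      using k_le card_delta_in_le_split[OF assms(2), of U] U unfolding h_def I_def H_def by simp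
  qed
  ultimately show ?thesis by blast
qed

end
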